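(* Let $S$ be a finite set of at least three points in the plane and $v>1$. Let $C$ be a smallest enclosing cross for $S$ and let the median highways $h_1,h_2$ be the middle lines of the two strips of $C$. Then the travel-time diameter $\delta_{\mathrm{med}}$ of $S$ for the speed-$v$ highway cross $h_1\cup h_2$ satisfies $\delta_{\mathrm{med}}\le(2+1/v)\,\delta_{\mathrm{opt}}$, where $\delta_{\mathrm{opt}}$ is the travel-time diameter of $S$ for an optimal axis-aligned speed-$v$ highway cross. Moreover, for every $v\ge\sqrt3$ there are point sets $S$ for which $\delta_{\mathrm{med}}\ge(2-1/(v+2))\,\delta_{\mathrm{opt}}$.
   Context: The underlying metric is the $L_1$-metric. An axis-aligned highway cross is the union $H$ of a horizontal and a vertical line; one travels with speed $1$ off $H$ ($L_1$-lengths) and with speed $v$ along either line of $H$. The travel time $t_H(p,q)$ is the minimum time of a path from $p$ to $q$, and the travel-time diameter of $S$ is $\max_{p,q\in S}t_H(p,q)$; an optimal axis-aligned highway cross minimizes it. An enclosing cross of $S$ is the union of a horizontal strip and a vertical strip (closed regions between two parallel lines) of equal width containing $S$; a smallest enclosing cross has minimum width. The middle line of a strip is the line halfway between its boundary lines. *)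

theory Defs
  imports Complex_Main
begin

type_synonym point = "real \<times> real"

definition l1dist :: "point \<Rightarrow> point \<Rightarrow> real" where
  "l1dist p q = \<bar>fst p - fst q\<bar> + \<bar>snd p - snd q\<bar>"

text \<open>Axis-aligned highway cross with vertical line x = a and horizontal line y = b.\<close>
definition step_time :: "real \<Rightarrow> real \<Rightarrow> real \<Rightarrow> point \<Rightarrow> point \<Rightarrow> real" where
  "step_time v a b p q =
     (if (fst p = a \<and> fst q = a) \<or> (snd p = b \<and> snd q = b)
      then min (l1dist p q) (l1dist p q / v) else l1dist p q)"

definition path_time :: "real \<Rightarrow> real \<Rightarrow> real \<Rightarrow> point list \<Rightarrow> real" where
  "path_time v a b ps = sum_list (map2 (step_time v a b) ps (tl ps))"

definition travel_time :: "real \<Rightarrow> real \<Rightarrow> real \<Rightarrow> point \<Rightarrow> point \<Rightarrow> real" where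
  "travel_time v a b p q =
     Inf {path_time v a b ps | ps. ps \<noteq> [] \<and> hd ps = p \<and> last ps = q}"

definition tt_diameter :: "real \<Rightarrow> real \<Rightarrow> real \<Rightarrow> point set \<Rightarrow> real" where
  "tt_diameter v a b S = Max {travel_time v a b p q | p q. p \<in> S \<and> q \<in> S}"

definition opt_diameter :: "real \<Rightarrow> point set \<Rightarrow> real" where
  "opt_diameter v S = Inf {tt_diameter v a b S | a b. True}"

definition enclosing_cross :: "point set \<Rightarrow> real \<Rightarrow> real \<Rightarrow> real \<Rightarrow> bool" where
  "enclosing_cross S d c w \<longleftrightarrow> w \<ge> 0 \<and>
     (\<forall>p\<in>S. (d \<le> fst p \<and> fst p \<le> d + w) \<or> (c \<le> snd p \<and> snd p \<le> c + w))"

definition smallest_enclosing_cross :: "point set \<Rightarrow> real \<Rightarrow> real \<Rightarrow> real \<Rightarrow> bool" where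
  "smallest_enclosing_cross S d c w \<longleftrightarrow> enclosing_cross S d c w \<and>
     (\<forall>d' c' w'. enclosing_cross S d' c' w' \<longrightarrow> w \<le> w')"

end

(* For v >= 1 the travel time has a closed form: a fastest path either ignores the highways
   or walks from p to the orthogonal projection of p onto one of the two lines, rides along
   the cross, and walks from a projection of q to q.  The minimum of the L1 distance and the
   best such route obeys the triangle inequality and bounds every single step from below,
   hence every path; moving the entry and exit points to the projections never costs time.

   Upper bound: let D be the diameter for an arbitrary cross.  Any two points need time at
   least min (|pq|, r p + r q), r being the L1 distance to that cross, and this alone allows
   a cross of width D around S; so the smallest enclosing cross has width w <= D.  Every
   point lies within w/2 of a median line and |pq| <= v D, so the median cross needs at most
   w + (w + |pq|) / v <= (2 + 1/v) D between any two points.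

   Lower bound: for median_example the cross x = 0, y = 2 connects every pair within 2 + 4/v,
   whereas the median cross x = 1, y = 1 needs 4 + 6/v = (2 - 1/(v+2)) (2 + 4/v) between the
   two far points once v^2 >= 3. *)
theory Submission
  imports Defs
begin

lemma divide_le_self: "(1::real) \<le> v \<Longrightarrow> 0 \<le> x \<Longrightarrow> x / v \<le> x"
  by (simp add: mult_imp_div_pos_le mult_le_cancel_left1)

lemma l1dist_nonneg: "0 \<le> l1dist p q"
  by (simp add: l1dist_def)

lemma l1dist_self [simp]: "l1dist p p = 0"
  by (simp add: l1dist_def)

lemma l1dist_commute: "l1dist p q = l1dist q p"
  by (simp add: l1dist_def abs_minus_commute)

lemma l1dist_triangle: "l1dist p r \<le> l1dist p q + l1dist q r"
  by (simp add: l1dist_def)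

lemma step_time_nonneg: "0 < v \<Longrightarrow> 0 \<le> step_time v a b p q"
  by (simp add: step_time_def l1dist_nonneg)

lemma step_time_le_l1dist: "step_time v a b p q \<le> l1dist p q"
  by (simp add: step_time_def)

lemma step_time_le_highway:
  "(fst p = a \<and> fst q = a) \<or> (snd p = b \<and> snd q = b) \<Longrightarrow> step_time v a b p q \<le> l1dist p q / v"
  by (simp add: step_time_def)

lemma path_time_Cons_Cons:
  "path_time v a b (p # q # ps) = step_time v a b p q + path_time v a b (q # ps)"
  by (simp add: path_time_def)

lemma path_time_singleton [simp]: "path_time v a b [p] = 0"
  by (simp add: path_time_def)

lemma path_time_nonneg: "0 < v \<Longrightarrow> 0 \<le> path_time v a b ps"
  unfolding path_time_def
  by (induction ps rule: induct_list012) (auto simp: step_time_nonneg)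

lemma travel_time_le_path_time:
  assumes "0 < v" "ps \<noteq> []" "hd ps = p" "last ps = q"
  shows "travel_time v a b p q \<le> path_time v a b ps"
  unfolding travel_time_def
proof (rule cInf_lower)
  show "bdd_below {path_time v a b ps | ps. ps \<noteq> [] \<and> hd ps = p \<and> last ps = q}"
    unfolding bdd_below_def using path_time_nonneg[OF \<open>0 < v\<close>] by blast
qed (use assms in blast)

lemma path_time_ge_subadditive:
  assumes triangle: "\<And>x y z. L x z \<le> L x y + L y z"
    and step: "\<And>x y. L x y \<le> step_time v a b x y"
    and self: "\<And>x. L x x \<le> 0"
  shows "ps \<noteq> [] \<Longrightarrow> L (hd ps) (last ps) \<le> path_time v a b ps"
proof (induction ps rule: induct_list012)
  case (2 x)
  then show ?case using self[of x] by simp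
next
  case (3 x y ps)
  have "L x (last (y # ps)) \<le> L x y + L y (last (y # ps))" by (rule triangle)
  also have "\<dots> \<le> step_time v a b x y + path_time v a b (y # ps)"
    using step[of x y] 3 by simp
  finally show ?case by (simp add: path_time_Cons_Cons)
qed simp

lemma travel_time_ge_subadditive:
  assumes "\<And>x y z. L x z \<le> L x y + L y z"
    and "\<And>x y. L x y \<le> step_time v a b x y"
    and "\<And>x. L x x \<le> 0"
  shows "L p q \<le> travel_time v a b p q"
  unfolding travel_time_def
proof (rule cInf_greatest)
  show "{path_time v a b ps | ps. ps \<noteq> [] \<and> hd ps = p \<and> last ps = q} \<noteq> {}"
    by (auto intro!: exI[of _ "[p, q]"])
qed (use path_time_ge_subadditive[OF assms] in blast)

definition highway_cross :: "real \<Rightarrow> real \<Rightarrow> point set" where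
  "highway_cross a b = {u. fst u = a \<or> snd u = b}"

definition route_time :: "real \<Rightarrow> point \<Rightarrow> point \<Rightarrow> point \<Rightarrow> point \<Rightarrow> real" where
  "route_time v p u w q = l1dist p u + l1dist u w / v + l1dist w q"

definition highway_time :: "real \<Rightarrow> real \<Rightarrow> real \<Rightarrow> point \<Rightarrow> point \<Rightarrow> real" where
  "highway_time v a b p q =
     min (min (route_time v p (a, snd p) (a, snd q) q) (route_time v p (fst p, b) (fst q, b) q))
         (min (route_time v p (a, snd p) (fst q, b) q) (route_time v p (fst p, b) (a, snd q) q))"

lemma travel_time_le_route_time:
  assumes v: "0 < v" and u: "u \<in> highway_cross a b" and w: "w \<in> highway_cross a b"
  shows "travel_time v a b p q \<le> route_time v p u w q"
proof (cases "(fst u = a \<and> fst w = a) \<or> (snd u = b \<and> snd w = b)")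
  case True
  have "travel_time v a b p q \<le> path_time v a b [p, u, w, q]"
    by (rule travel_time_le_path_time) (use v in auto)
  also have "\<dots> \<le> route_time v p u w q"
    using True step_time_le_l1dist[of v a b p u] step_time_le_l1dist[of v a b w q]
      step_time_le_highway[of u a w b v]
    by (simp add: path_time_Cons_Cons route_time_def)
  finally show ?thesis .
next
  case False
  have corner: "l1dist u (a, b) + l1dist (a, b) w = l1dist u w"
    using False u w by (auto simp: highway_cross_def l1dist_def)
  have "travel_time v a b p q \<le> path_time v a b [p, u, (a, b), w, q]"
    by (rule travel_time_le_path_time) (use v in auto)
  also have "\<dots> \<le> l1dist p u + l1dist u (a, b) / v + l1dist (a, b) w / v + l1dist w q"
  proof -
    have "step_time v a b u (a, b) \<le> l1dist u (a, b) / v" "step_time v a b (a, b) w \<le> l1dist (a, b) w / v"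
      using u w by (auto simp: highway_cross_def intro!: step_time_le_highway)
    then show ?thesis
      using step_time_le_l1dist[of v a b p u] step_time_le_l1dist[of v a b w q]
      by (simp add: path_time_Cons_Cons)
  qed
  also have "\<dots> = route_time v p u w q"
    by (simp add: route_time_def flip: corner add_divide_distrib)
  finally show ?thesis .
qed

lemma route_time_commute: "route_time v p u w q = route_time v q w u p"
  by (simp add: route_time_def l1dist_commute)

lemma route_time_le_prefix: "route_time v p u w s \<le> l1dist p q + route_time v q u w s"
  using l1dist_triangle[of p u q] by (simp add: route_time_def)

lemma route_time_le_suffix: "route_time v p u w s \<le> route_time v p u w q + l1dist q s"
  using l1dist_triangle[of w s q] by (simp add: route_time_def)

lemma route_time_concat:
  assumes "1 \<le> v"
  shows "route_time v p u w' s \<le> route_time v p u w q + route_time v q u' w' s"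
proof -
  have "l1dist u w' \<le> l1dist u w + l1dist w u' + l1dist u' w'"
    using l1dist_triangle[of u w' w] l1dist_triangle[of w w' u'] by simp
  then have "l1dist u w' / v \<le> l1dist u w / v + l1dist w u' / v + l1dist u' w' / v"
    using assms by (simp flip: add_divide_distrib add: divide_right_mono)
  moreover have "l1dist w u' / v \<le> l1dist w q + l1dist q u'"
    using divide_le_self[OF assms l1dist_nonneg, of w u'] l1dist_triangle[of w u' q] by simp
  ultimately show ?thesis by (simp add: route_time_def)
qed

text \<open>Entering the highway at a point \<open>u\<^sub>0\<close> on a shortest path from \<open>p\<close> to \<open>u\<close>
  is never slower: riding from \<open>u\<^sub>0\<close> to \<open>u\<close> is no slower than walking.\<close>
lemma route_time_entry_between:
  assumes "1 \<le> v" and between: "l1dist p u\<^sub>0 + l1dist u\<^sub>0 u = l1dist p u"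
  shows "route_time v p u\<^sub>0 w q \<le> route_time v p u w q"
proof -
  have "l1dist u\<^sub>0 w / v \<le> l1dist u\<^sub>0 u / v + l1dist u w / v"
    using assms l1dist_triangle[of u\<^sub>0 w u] by (simp flip: add_divide_distrib add: divide_right_mono)
  also have "\<dots> \<le> l1dist u\<^sub>0 u + l1dist u w / v"
    using divide_le_self[OF assms(1) l1dist_nonneg] by simp
  finally show ?thesis
    using between by (simp add: route_time_def)
qed

lemma route_time_exit_between:
  assumes "1 \<le> v" and "l1dist w w\<^sub>0 + l1dist w\<^sub>0 q = l1dist w q"
  shows "route_time v p u w\<^sub>0 q \<le> route_time v p u w q"
  using route_time_entry_between[of v q w\<^sub>0 w u p] assms
  by (simp add: route_time_commute l1dist_commute add.commute)

lemma highway_time_le_route_time: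
  assumes v: "1 \<le> v" and u: "u \<in> highway_cross a b" and w: "w \<in> highway_cross a b"
  shows "highway_time v a b p q \<le> route_time v p u w q"
proof -
  define u\<^sub>0 where "u\<^sub>0 = (if fst u = a then (a, snd p) else (fst p, b))"
  define w\<^sub>0 where "w\<^sub>0 = (if fst w = a then (a, snd q) else (fst q, b))"
  have "highway_time v a b p q \<le> route_time v p u\<^sub>0 w\<^sub>0 q"
    by (auto simp: highway_time_def u\<^sub>0_def w\<^sub>0_def intro: min.coboundedI1 min.coboundedI2)
  also have "\<dots> \<le> route_time v p u\<^sub>0 w q"
    using w by (intro route_time_exit_between[OF v]) (auto simp: w\<^sub>0_def highway_cross_def l1dist_def)
  also have "\<dots> \<le> route_time v p u w q"
    using u by (intro route_time_entry_between[OF v]) (auto simp: u\<^sub>0_def highway_cross_def l1dist_def)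
  finally show ?thesis .
qed

lemma highway_time_attained:
  obtains u w where "u \<in> highway_cross a b" "w \<in> highway_cross a b"
    "highway_time v a b p q = route_time v p u w q"
proof -
  let ?r = "\<lambda>u w. route_time v p u w q"
  have "highway_time v a b p q \<in> {?r (a, snd p) (a, snd q), ?r (fst p, b) (fst q, b),
                                    ?r (a, snd p) (fst q, b), ?r (fst p, b) (a, snd q)}"
    unfolding highway_time_def min_def by auto
  then show thesis
    by (elim insertE) (auto intro!: that simp: highway_cross_def)
qed

lemma min_highway_time_triangle:
  assumes v: "1 \<le> v"
  shows "min (l1dist p s) (highway_time v a b p s)
    \<le> min (l1dist p q) (highway_time v a b p q) + min (l1dist q s) (highway_time v a b q s)"
proof -
  obtain u w where u: "u \<in> highway_cross a b" and w: "w \<in> highway_cross a b"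
    and pq: "highway_time v a b p q = route_time v p u w q"
    by (rule highway_time_attained)
  obtain u' w' where u': "u' \<in> highway_cross a b" and w': "w' \<in> highway_cross a b"
    and qs: "highway_time v a b q s = route_time v q u' w' s"
    by (rule highway_time_attained)
  have "highway_time v a b p s \<le> l1dist p q + highway_time v a b q s"
    using highway_time_le_route_time[OF v u' w', of p s] route_time_le_prefix[of v p u' w' s q] qs
    by simp
  moreover have "highway_time v a b p s \<le> highway_time v a b p q + l1dist q s"
    using highway_time_le_route_time[OF v u w, of p s] route_time_le_suffix[of v p u w s q] pq
    by simp
  moreover have "highway_time v a b p s \<le> highway_time v a b p q + highway_time v a b q s"
    using highway_time_le_route_time[OF v u w', of p s] route_time_concat[OF v, of p u w' s w q u'] pq qs
    by simp
  ultimately show ?thesis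
    using l1dist_triangle[of p s q] by (simp add: min_def)
qed

theorem travel_time_eq:
  assumes v: "1 \<le> v"
  shows "travel_time v a b p q = min (l1dist p q) (highway_time v a b p q)"
proof (rule antisym)
  obtain u w where "u \<in> highway_cross a b" "w \<in> highway_cross a b"
    and "highway_time v a b p q = route_time v p u w q"
    by (rule highway_time_attained)
  then have "travel_time v a b p q \<le> highway_time v a b p q"
    using v by (simp add: travel_time_le_route_time)
  moreover have "travel_time v a b p q \<le> path_time v a b [p, q]"
    by (rule travel_time_le_path_time) (use v in auto)
  moreover have "path_time v a b [p, q] \<le> l1dist p q"
    by (simp add: path_time_Cons_Cons step_time_le_l1dist)
  ultimately show "travel_time v a b p q \<le> min (l1dist p q) (highway_time v a b p q)"
    by simp
next
  have "min (l1dist x y) (highway_time v a b x y) \<le> step_time v a b x y" for x y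
  proof (cases "(fst x = a \<and> fst y = a) \<or> (snd x = b \<and> snd y = b)")
    case True
    then have "x \<in> highway_cross a b" "y \<in> highway_cross a b"
      by (auto simp: highway_cross_def)
    then have "highway_time v a b x y \<le> route_time v x x y y"
      by (rule highway_time_le_route_time[OF v])
    then have "highway_time v a b x y \<le> l1dist x y / v"
      by (simp add: route_time_def)
    then show ?thesis
      using True by (simp add: step_time_def min.coboundedI2)
  next
    case False
    then show ?thesis
      by (auto simp: step_time_def)
  qed
  then show "min (l1dist p q) (highway_time v a b p q) \<le> travel_time v a b p q"
    by (intro travel_time_ge_subadditive min_highway_time_triangle v) auto
qed

lemma route_time_ge_l1dist_divide:
  assumes "1 \<le> v"
  shows "l1dist p q / v \<le> route_time v p u w q"
proof -
  have "l1dist p q / v \<le> l1dist p u / v + l1dist u w / v + l1dist w q / v"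
    using assms l1dist_triangle[of p q u] l1dist_triangle[of u q w]
    by (simp flip: add_divide_distrib add: divide_right_mono)
  then show ?thesis
    using divide_le_self[OF assms l1dist_nonneg, of p u] divide_le_self[OF assms l1dist_nonneg, of w q]
    by (simp add: route_time_def)
qed

lemma travel_time_ge_l1dist_divide:
  assumes "1 \<le> v"
  shows "l1dist p q / v \<le> travel_time v a b p q"
proof -
  obtain u w where "highway_time v a b p q = route_time v p u w q"
    by (rule highway_time_attained)
  then show ?thesis
    using assms divide_le_self[OF assms l1dist_nonneg] route_time_ge_l1dist_divide[OF assms]
    by (simp add: travel_time_eq)
qed

definition cross_dist :: "real \<Rightarrow> real \<Rightarrow> point \<Rightarrow> real" where
  "cross_dist a b p = min \<bar>fst p - a\<bar> \<bar>snd p - b\<bar>"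

lemma cross_dist_le_l1dist: "u \<in> highway_cross a b \<Longrightarrow> cross_dist a b p \<le> l1dist p u"
  by (auto simp: cross_dist_def highway_cross_def l1dist_def)

lemma nearest_cross_point:
  obtains u where "u \<in> highway_cross a b" "l1dist p u = cross_dist a b p"
proof (cases "\<bar>fst p - a\<bar> \<le> \<bar>snd p - b\<bar>")
  case True
  then show thesis
    by (intro that[of "(a, snd p)"]) (auto simp: highway_cross_def l1dist_def cross_dist_def)
next
  case False
  then show thesis
    by (intro that[of "(fst p, b)"]) (auto simp: highway_cross_def l1dist_def cross_dist_def)
qed

lemma travel_time_ge_cross_dist:
  assumes "1 \<le> v"
  shows "min (l1dist p q) (cross_dist a b p + cross_dist a b q) \<le> travel_time v a b p q"
proof -
  obtain u w where "u \<in> highway_cross a b" "w \<in> highway_cross a b"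
    and "highway_time v a b p q = route_time v p u w q"
    by (rule highway_time_attained)
  moreover have "0 \<le> l1dist u w / v"
    using assms l1dist_nonneg[of u w] by simp
  ultimately have "cross_dist a b p + cross_dist a b q \<le> highway_time v a b p q"
    using cross_dist_le_l1dist[of u a b p] cross_dist_le_l1dist[of w a b q]
    by (simp add: route_time_def l1dist_commute[of w q])
  then show ?thesis
    using assms by (auto simp: travel_time_eq)
qed

lemma travel_time_le_cross_dist:
  assumes "0 < v"
  shows "travel_time v a b p q
    \<le> cross_dist a b p + (cross_dist a b p + l1dist p q + cross_dist a b q) / v + cross_dist a b q"
proof -
  obtain u where u: "u \<in> highway_cross a b" "l1dist p u = cross_dist a b p"
    by (rule nearest_cross_point)
  obtain w where w: "w \<in> highway_cross a b" "l1dist q w = cross_dist a b q"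
    by (rule nearest_cross_point)
  have "l1dist u w \<le> l1dist u p + l1dist p q + l1dist q w"
    using l1dist_triangle[of u w p] l1dist_triangle[of p w q] by simp
  then have "l1dist u w / v \<le> (cross_dist a b p + l1dist p q + cross_dist a b q) / v"
    using assms u w by (simp add: l1dist_commute divide_right_mono)
  then show ?thesis
    using travel_time_le_route_time[OF assms u(1) w(1), of p q] u w
    by (simp add: route_time_def l1dist_commute)
qed

lemma finite_travel_times:
  "finite S \<Longrightarrow> finite {travel_time v a b p q | p q. p \<in> S \<and> q \<in> S}"
  by (rule finite_image_set2) auto

lemma travel_time_le_tt_diameter:
  "finite S \<Longrightarrow> p \<in> S \<Longrightarrow> q \<in> S \<Longrightarrow> travel_time v a b p q \<le> tt_diameter v a b S"
  unfolding tt_diameter_def by (rule Max_ge[OF finite_travel_times]) blast+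

lemma tt_diameter_le:
  "finite S \<Longrightarrow> S \<noteq> {} \<Longrightarrow> (\<And>p q. p \<in> S \<Longrightarrow> q \<in> S \<Longrightarrow> travel_time v a b p q \<le> M)
    \<Longrightarrow> tt_diameter v a b S \<le> M"
  unfolding tt_diameter_def by (rule Max.boundedI[OF finite_travel_times]) blast+

lemma tt_diameter_nonneg:
  assumes "finite S" "S \<noteq> {}" "1 \<le> v"
  shows "0 \<le> tt_diameter v a b S"
proof -
  obtain p where "p \<in> S" using assms by blast
  then show ?thesis
    using travel_time_ge_l1dist_divide[OF assms(3), of p p a b]
      travel_time_le_tt_diameter[OF assms(1) \<open>p \<in> S\<close> \<open>p \<in> S\<close>, of v a b]
    by simp
qed

lemma opt_diameter_le_tt_diameter:
  "finite S \<Longrightarrow> S \<noteq> {} \<Longrightarrow> 1 \<le> v \<Longrightarrow> opt_diameter v S \<le> tt_diameter v a b S"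
  unfolding opt_diameter_def
  by (rule cInf_lower) (auto simp: bdd_below_def intro: tt_diameter_nonneg)

lemma le_opt_diameter: "(\<And>a b. M \<le> tt_diameter v a b S) \<Longrightarrow> M \<le> opt_diameter v S"
  unfolding opt_diameter_def by (rule cInf_greatest) auto

text \<open>The strip \<open>[d, d + D]\<close> extends \<open>R\<close> beyond \<open>a\<close> towards \<open>x\<^sub>0\<close> and \<open>D - R < R\<close> away from
  it; a point within distance \<open>D\<close> of \<open>x\<^sub>0\<close> can leave it only towards \<open>x\<^sub>0\<close>.\<close>
lemma strip_toward:
  fixes x\<^sub>0 x a R D d :: real
  assumes "R \<le> \<bar>x\<^sub>0 - a\<bar>" "D < 2 * R" "d = (if a \<le> x\<^sub>0 then a - (D - R) else a - R)"
  shows strip_toward_near: "\<bar>x - a\<bar> \<le> D - R \<Longrightarrow> d \<le> x \<and> x \<le> d + D"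
    and strip_toward_close: "\<bar>x\<^sub>0 - x\<bar> \<le> D \<Longrightarrow> (d \<le> x \<and> x \<le> d + D) \<or> R < \<bar>x - a\<bar>"
  using assms by (auto split: if_splits abs_split)

lemma in_strips_toward_farthest_point:
  assumes p\<^sub>0: "cross_dist a b p\<^sub>0 = R" and q: "cross_dist a b q \<le> R"
    and bound: "min (l1dist p\<^sub>0 q) (R + cross_dist a b q) \<le> D" and "D < 2 * R"
    and d: "d = (if a \<le> fst p\<^sub>0 then a - (D - R) else a - R)"
    and c: "c = (if b \<le> snd p\<^sub>0 then b - (D - R) else b - R)"
  shows "(d \<le> fst q \<and> fst q \<le> d + D) \<or> (c \<le> snd q \<and> snd q \<le> c + D)"
proof -
  have x: "R \<le> \<bar>fst p\<^sub>0 - a\<bar>" and y: "R \<le> \<bar>snd p\<^sub>0 - b\<bar>"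
    using p\<^sub>0 by (auto simp: cross_dist_def)
  consider "R + cross_dist a b q \<le> D" | "l1dist p\<^sub>0 q \<le> D"
    using bound by linarith
  then show ?thesis
  proof cases
    case 1
    then have "\<bar>fst q - a\<bar> \<le> D - R \<or> \<bar>snd q - b\<bar> \<le> D - R"
      by (auto simp: cross_dist_def)
    then show ?thesis
      using strip_toward_near[OF x \<open>D < 2 * R\<close> d] strip_toward_near[OF y \<open>D < 2 * R\<close> c] by blast
  next
    case 2
    then have "\<bar>fst p\<^sub>0 - fst q\<bar> \<le> D" "\<bar>snd p\<^sub>0 - snd q\<bar> \<le> D"
      by (auto simp: l1dist_def)
    moreover have "\<not> (R < \<bar>fst q - a\<bar> \<and> R < \<bar>snd q - b\<bar>)"
      using q by (auto simp: cross_dist_def)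
    ultimately show ?thesis
      using strip_toward_close[OF x \<open>D < 2 * R\<close> d] strip_toward_close[OF y \<open>D < 2 * R\<close> c] by blast
  qed
qed

lemma enclosing_cross_if_pairwise_bound:
  assumes fin: "finite S" and ne: "S \<noteq> {}"
    and bound: "\<And>p q. p \<in> S \<Longrightarrow> q \<in> S \<Longrightarrow> min (l1dist p q) (cross_dist a b p + cross_dist a b q) \<le> D"
  shows "\<exists>d c. enclosing_cross S d c D"
proof -
  define R where "R = Max (cross_dist a b ` S)"
  have le_R: "cross_dist a b q \<le> R" if "q \<in> S" for q
    unfolding R_def using fin that by simp
  obtain p\<^sub>0 where p\<^sub>0: "p\<^sub>0 \<in> S" "cross_dist a b p\<^sub>0 = R"
  proof -
    have "R \<in> cross_dist a b ` S"
      unfolding R_def using fin ne by (intro Max_in) auto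
    then show thesis using that by blast
  qed
  have "0 \<le> D"
    using bound[OF p\<^sub>0(1) p\<^sub>0(1)] by (simp add: cross_dist_def)
  show ?thesis
  proof (cases "2 * R \<le> D")
    case True
    then have "enclosing_cross S (a - D/2) (b - D/2) D"
      using \<open>0 \<le> D\<close> le_R unfolding enclosing_cross_def cross_dist_def by fastforce
    then show ?thesis by blast
  next
    case False
    define d where "d = (if a \<le> fst p\<^sub>0 then a - (D - R) else a - R)"
    define c where "c = (if b \<le> snd p\<^sub>0 then b - (D - R) else b - R)"
    have "enclosing_cross S d c D"
      unfolding enclosing_cross_def
    proof (intro conjI ballI)
      fix q assume "q \<in> S"
      then show "(d \<le> fst q \<and> fst q \<le> d + D) \<or> (c \<le> snd q \<and> snd q \<le> c + D)"
        using False p\<^sub>0 bound[OF p\<^sub>0(1)] le_R d_def c_def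
        by (intro in_strips_toward_farthest_point) auto
    qed (fact \<open>0 \<le> D\<close>)
    then show ?thesis by blast
  qed
qed

lemma smallest_enclosing_cross_width_le_tt_diameter:
  assumes "finite S" "S \<noteq> {}" "1 \<le> v" and "smallest_enclosing_cross S d c w"
  shows "w \<le> tt_diameter v a b S"
proof -
  have "\<exists>d' c'. enclosing_cross S d' c' (tt_diameter v a b S)"
    using assms(1,2) travel_time_ge_cross_dist[OF assms(3)] travel_time_le_tt_diameter[OF assms(1)]
    by (intro enclosing_cross_if_pairwise_bound) (blast intro: order_trans)+
  then show ?thesis
    using assms(4) unfolding smallest_enclosing_cross_def by blast
qed

lemma median_tt_diameter_le:
  assumes fin: "finite S" and ne: "S \<noteq> {}" and v: "1 \<le> v"
    and sec: "smallest_enclosing_cross S d c w"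
  shows "tt_diameter v (d + w/2) (c + w/2) S \<le> (2 + 1/v) * tt_diameter v a b S"
proof (rule tt_diameter_le[OF fin ne])
  fix p q assume p: "p \<in> S" and q: "q \<in> S"
  define D where "D = tt_diameter v a b S"
  have "w \<le> D"
    unfolding D_def using smallest_enclosing_cross_width_le_tt_diameter[OF fin ne v sec] .
  have "l1dist p q / v \<le> D"
    using travel_time_ge_l1dist_divide[OF v, of p q a b] travel_time_le_tt_diameter[OF fin p q, of v a b]
    unfolding D_def by linarith
  then have "l1dist p q \<le> v * D"
    using v by (simp add: divide_le_eq mult.commute)
  have near: "cross_dist (d + w/2) (c + w/2) x \<le> w/2" if "x \<in> S" for x
  proof -
    have "(d \<le> fst x \<and> fst x \<le> d + w) \<or> (c \<le> snd x \<and> snd x \<le> c + w)"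
      using sec that unfolding smallest_enclosing_cross_def enclosing_cross_def by blast
    then have "\<bar>fst x - (d + w/2)\<bar> \<le> w/2 \<or> \<bar>snd x - (c + w/2)\<bar> \<le> w/2"
      by linarith
    then show ?thesis
      unfolding cross_dist_def by linarith
  qed
  let ?r = "cross_dist (d + w/2) (c + w/2)"
  have "(?r p + l1dist p q + ?r q) / v \<le> (w/2 + l1dist p q + w/2) / v"
    using near[OF p] near[OF q] v by (intro divide_right_mono) auto
  then have "travel_time v (d + w/2) (c + w/2) p q \<le> w/2 + (w/2 + l1dist p q + w/2) / v + w/2"
    using travel_time_le_cross_dist[of v "d + w/2" "c + w/2" p q] near[OF p] near[OF q] v
    by linarith
  also have "\<dots> \<le> D + (D + v * D) / v"
  proof -
    have "(w/2 + l1dist p q + w/2) / v \<le> (D + v * D) / v"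
      using \<open>w \<le> D\<close> \<open>l1dist p q \<le> v * D\<close> v by (intro divide_right_mono) auto
    then show ?thesis
      using \<open>w \<le> D\<close> by linarith
  qed
  also have "\<dots> = (2 + 1/v) * D"
    using v by (simp add: field_simps)
  finally show "travel_time v (d + w/2) (c + w/2) p q \<le> (2 + 1/v) * tt_diameter v a b S"
    by (simp add: D_def)
qed

lemma median_tt_diameter_le_opt_diameter:
  assumes "finite S" "S \<noteq> {}" "1 \<le> v" "smallest_enclosing_cross S d c w"
  shows "tt_diameter v (d + w/2) (c + w/2) S \<le> (2 + 1/v) * opt_diameter v S"
proof -
  have "0 < 2 + 1/v"
    using assms(3) by (simp add: add_pos_nonneg)
  moreover have "tt_diameter v (d + w/2) (c + w/2) S / (2 + 1/v) \<le> opt_diameter v S"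
    using median_tt_diameter_le[OF assms] \<open>0 < 2 + 1/v\<close>
    by (intro le_opt_diameter) (simp add: divide_le_eq mult.commute)
  ultimately show ?thesis
    by (simp add: divide_le_eq mult.commute)
qed

text \<open>The points \<open>(1, 1)\<close>, \<open>(1, 3)\<close>, \<open>(-1, 0)\<close> pin the smallest enclosing cross to
  \<open>[0, 2] \<times> [0, 2]\<close>, with median lines \<open>x = 1\<close>, \<open>y = 1\<close>; the cross \<open>x = 0\<close>, \<open>y = 2\<close>
  passes through the two far points.\<close>
definition median_example :: "real \<Rightarrow> point set" where
  "median_example v = {(-(v + 2), 2), (0, v + 4), (1, 1), (1, 3), (-1, 0)}"

lemma median_example_card: "3 \<le> card (median_example v)"
proof -
  have "card {(1, 1), (1, 3), (-1, 0) :: point} = 3" by simp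
  moreover have "card {(1, 1), (1, 3), (-1, 0) :: point} \<le> card (median_example v)"
    by (rule card_mono) (auto simp: median_example_def)
  ultimately show ?thesis by simp
qed

lemma median_example_smallest_enclosing_cross:
  assumes "0 < v"
  shows "smallest_enclosing_cross (median_example v) 0 0 2"
  unfolding smallest_enclosing_cross_def
proof (intro conjI allI impI)
  show "enclosing_cross (median_example v) 0 0 2"
    using assms by (auto simp: enclosing_cross_def median_example_def)
next
  fix d c w assume "enclosing_cross (median_example v) d c w"
  then show "2 \<le> w"
    using assms unfolding enclosing_cross_def median_example_def by simp linarith
qed

lemma median_example_route_time_le:
  assumes "1 \<le> v" "p \<in> median_example v" "q \<in> median_example v"
  shows "route_time v p (if snd p = 2 then p else (0, snd p)) (if snd q = 2 then q else (0, snd q)) q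
    \<le> 2 + 4/v"
  using assms by (auto simp: median_example_def route_time_def l1dist_def field_simps)

lemma median_example_tt_diameter_le:
  assumes v: "1 \<le> v"
  shows "tt_diameter v 0 2 (median_example v) \<le> 2 + 4/v"
proof (rule tt_diameter_le)
  fix p q assume pq: "p \<in> median_example v" "q \<in> median_example v"
  have "(if snd x = 2 then x else (0, snd x)) \<in> highway_cross 0 2" for x :: point
    by (simp add: highway_cross_def)
  then have "travel_time v 0 2 p q
      \<le> route_time v p (if snd p = 2 then p else (0, snd p)) (if snd q = 2 then q else (0, snd q)) q"
    using v by (intro travel_time_le_route_time) auto
  then show "travel_time v 0 2 p q \<le> 2 + 4/v"
    using median_example_route_time_le[OF v pq] by linarith
qed (auto simp: median_example_def)

lemma median_example_median_tt_diameter: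
  assumes "1 < v" "3 \<le> v * v"
  shows "4 + 6/v \<le> tt_diameter v 1 1 (median_example v)"
proof -
  have "v * 4 \<le> v * (v + v * v)"
    using \<open>1 < v\<close> \<open>3 \<le> v * v\<close> by (intro mult_left_mono) auto
  define A :: point where "A = (-(v + 2), 2)"
  define B :: point where "B = (0, v + 4)"
  have "4 + 6/v \<le> min (l1dist A B) (highway_time v 1 1 A B)"
    using \<open>1 < v\<close> \<open>3 \<le> v * v\<close> \<open>v * 4 \<le> v * (v + v * v)\<close>
    by (simp add: A_def B_def highway_time_def route_time_def l1dist_def field_simps)
  also have "\<dots> = travel_time v 1 1 A B"
    using \<open>1 < v\<close> by (simp add: travel_time_eq)
  also have "\<dots> \<le> tt_diameter v 1 1 (median_example v)"
    by (rule travel_time_le_tt_diameter) (auto simp: median_example_def A_def B_def)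
  finally show ?thesis .
qed

lemma median_lower_bound_example:
  assumes v: "sqrt 3 \<le> v"
  shows "\<exists>S d c w. finite S \<and> card S \<ge> 3 \<and> smallest_enclosing_cross S d c w \<and>
           tt_diameter v (d + w/2) (c + w/2) S \<ge> (2 - 1/(v+2)) * opt_diameter v S"
proof -
  let ?S = "median_example v"
  have "1 < v"
  proof -
    have "1 < sqrt (3::real)"
      by simp
    then show ?thesis
      using v by linarith
  qed
  have "sqrt 3 * sqrt 3 \<le> v * v"
    using v \<open>1 < v\<close> by (intro mult_mono) auto
  then have "3 \<le> v * v" by simp
  have "(2 - 1/(v+2)) * opt_diameter v ?S \<le> (2 - 1/(v+2)) * (2 + 4/v)"
  proof (rule mult_left_mono)
    show "opt_diameter v ?S \<le> 2 + 4/v"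
      using opt_diameter_le_tt_diameter[of ?S v 0 2] median_example_tt_diameter_le[of v] \<open>1 < v\<close>
      by (simp add: median_example_def)
    show "0 \<le> 2 - 1/(v+2)"
      using \<open>1 < v\<close> by (simp add: field_simps)
  qed
  also have "\<dots> = 4 + 6/v"
  proof -
    have "v + 2 \<noteq> 0" "v * (v + 2) \<noteq> 0"
      using \<open>1 < v\<close> by auto
    with \<open>1 < v\<close> show ?thesis
      by (simp add: field_simps)
  qed
  also have "\<dots> \<le> tt_diameter v (0 + 2/2) (0 + 2/2) ?S"
    using median_example_median_tt_diameter[OF \<open>1 < v\<close> \<open>3 \<le> v * v\<close>] by simp
  finally have "(2 - 1/(v+2)) * opt_diameter v ?S \<le> tt_diameter v (0 + 2/2) (0 + 2/2) ?S" .
  moreover have "smallest_enclosing_cross ?S 0 0 2"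
    using \<open>1 < v\<close> by (simp add: median_example_smallest_enclosing_cross)
  moreover have "finite ?S"
    by (simp add: median_example_def)
  ultimately show ?thesis
    using median_example_card by blast
qed

theorem lemma3:
  shows "(\<forall>(S::point set) v d c w. finite S \<and> card S \<ge> 3 \<and> v > 1 \<and>
            smallest_enclosing_cross S d c w \<longrightarrow>
            tt_diameter v (d + w/2) (c + w/2) S \<le> (2 + 1/v) * opt_diameter v S)
       \<and> (\<forall>v::real. v \<ge> sqrt 3 \<longrightarrow>
            (\<exists>(S::point set) d c w. finite S \<and> card S \<ge> 3 \<and>
               smallest_enclosing_cross S d c w \<and>
               tt_diameter v (d + w/2) (c + w/2) S \<ge> (2 - 1/(v+2)) * opt_diameter v S))"
proof (intro conjI allI impI)
  fix S :: "point set" and v d c w :: real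
  assume "finite S \<and> card S \<ge> 3 \<and> v > 1 \<and> smallest_enclosing_cross S d c w"
  then show "tt_diameter v (d + w/2) (c + w/2) S \<le> (2 + 1/v) * opt_diameter v S"
    by (intro median_tt_diameter_le_opt_diameter) auto
next
  fix v :: real
  assume "v \<ge> sqrt 3"
  then show "\<exists>(S::point set) d c w. finite S \<and> card S \<ge> 3 \<and> smallest_enclosing_cross S d c w \<and>
      tt_diameter v (d + w/2) (c + w/2) S \<ge> (2 - 1/(v+2)) * opt_diameter v S"
    by (rule median_lower_bound_example)
qed

end
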